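(* Let $n\ge 2$, $1\le t\le n-1$ and $0<\epsilon\le 1/2$. Consider the $\mathrm{Knapsack}$ instance with $n$ objects, $c_i=v_i=1$ for all $i\in V=[n]$ and capacity $C=2(1-\epsilon)$, with LP relaxation $K=\{x\in[0,1]^n: C-\sum_i x_i\ge 0\}$. Let $\alpha=C/(n+(t-1)(1-\epsilon))$ and define $y\in[0,1]^{\mathcal P_t(V)}$ by $y_\emptyset=1$, $y_{\{i\}}=\alpha$ for all $i\in V$, and $y_I=0$ whenever $|I|>1$. Then $y\in \mathrm{SA}^t(K)$, and $\sum_{i}v_iy_{\{i\}}=n\alpha$ while the optimal integral value is $1$.
   Context: Notation: $\mathcal P(U)$ is the power set of $U$ and $\mathcal P_t(U)$ the set of subsets of $U$ of size at most $t$. For a collection $\mathcal T$ of subsets of $V$ and a vector $y$ indexed by subsets of $V$, $M_{\mathcal T}(y)$ is the symmetric matrix with rows and columns indexed by $\mathcal T$ and $(I,J)$-entry $y_{I\cup J}$. For an affine function $g(x)=b+\sum_{j\in V}a_jx_j$, $g*y$ is the vector with $(g*y)_I=b\,y_I+\sum_{j\in V}a_j\,y_{I\cup\{j\}}$. The $t$-th Sherali-Adams lifted polytope of $K=\{x\in[0,1]^n: g_\ell(x)\ge0,\ \ell=1,\dots,m\}$ (with affine $g_\ell$) is $\mathrm{SA}^t(K)$, the set of $y\in[0,1]^{\mathcal P_t(V)}$ with $y_\emptyset=1$, $M_{\mathcal P(U)}(y)\succeq 0$ for every $U\subseteq V$ with $|U|\le t$, and $M_{\mathcal P(W)}(g_\ell*y)\succeq0$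 for every $\ell$ and every $W\subseteq V$ with $|W|\le t-1$. Here the only constraint is $g(x)=C-\sum_i x_i$. *)

theory Defs
  imports Complex_Main
begin

text \<open>Vectors indexed by subsets of the ground set are functions  nat set => real;
  only their values on the relevant index sets matter.\<close>

definition psd_on :: "nat set set \<Rightarrow> (nat set \<Rightarrow> nat set \<Rightarrow> real) \<Rightarrow> bool" where
  "psd_on T M \<longleftrightarrow> (\<forall>z :: nat set \<Rightarrow> real. (\<Sum>I\<in>T. \<Sum>J\<in>T. z I * M I J * z J) \<ge> 0)"

definition moment_mat :: "(nat set \<Rightarrow> real) \<Rightarrow> nat set \<Rightarrow> nat set \<Rightarrow> real" where
  "moment_mat y I J = y (I \<union> J)"

definition shift :: "nat set \<Rightarrow> real \<Rightarrow> (nat \<Rightarrow> real) \<Rightarrow> (nat set \<Rightarrow> real) \<Rightarrow> nat set \<Rightarrow> real" where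
  "shift V b a y I = b * y I + (\<Sum>j\<in>V. a j * y (I \<union> {j}))"

text \<open>The t-th Sherali-Adams lifted set of K = {x in [0,1]^V : b_l + sum_j a_l j x_j >= 0, l in L}.
  Constraints are given by a finite index set L with constant terms b and coefficients a.\<close>
definition SA :: "nat \<Rightarrow> nat set \<Rightarrow> 'l set \<Rightarrow> ('l \<Rightarrow> real) \<Rightarrow> ('l \<Rightarrow> nat \<Rightarrow> real)
                   \<Rightarrow> (nat set \<Rightarrow> real) set" where
  "SA t V L b a = {y.
      (\<forall>I. I \<subseteq> V \<and> card I \<le> t \<longrightarrow> 0 \<le> y I \<and> y I \<le> 1)
    \<and> y {} = 1
    \<and> (\<forall>U. U \<subseteq> V \<and> card U \<le> t \<longrightarrow> psd_on (Pow U) (moment_mat y))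
    \<and> (\<forall>l\<in>L. \<forall>W. W \<subseteq> V \<and> card W \<le> t - 1 \<longrightarrow>
                 psd_on (Pow W) (moment_mat (shift V (b l) (a l) y)))}"

definition knapsack_opt :: "nat set \<Rightarrow> (nat \<Rightarrow> real) \<Rightarrow> (nat \<Rightarrow> real) \<Rightarrow> real \<Rightarrow> real" where
  "knapsack_opt V c v C = Max {(\<Sum>i\<in>S. v i) | S. S \<subseteq> V \<and> (\<Sum>i\<in>S. c i) \<le> C}"

end

theory Submission
  imports Defs
begin

text \<open>
  The lifted point y of the theorem is a "degree-one" vector: y {} = 1, y {i} = \<alpha>, and y
  vanishes on all sets with at least two elements.  Every matrix in the definition of the
  Sherali-Adams lift is then a moment matrix of a vector supported on the empty set and the
  singletons, and its quadratic form is a sum of squares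
    a z_0^2 + sum_i (2 b_i z_0 z_i + b_i z_i^2) = (a - sum_i b_i) z_0^2 + sum_i b_i (z_i + z_0)^2,
  hence positive semidefinite as soon as all b_i \<ge> 0 and sum_i b_i \<le> a.  For the knapsack instance the
  conditions reduce to the inequalities t \<alpha> \<le> 1 and (t-1)(C-1)\<alpha> \<le> C - n\<alpha>, which
  follow from the choice of \<alpha>.  Finally, the integral optimum is 1 because C lies in [1,2).
\<close>

text \<open>Having at least two elements (or being infinite) is inherited by supersets; this is
  why entries y (I \<union> J) of a moment matrix vanish as soon as I or J is large.\<close>
lemma large_set_mono:
  assumes "K \<noteq> {}" and "card K \<noteq> 1" and "K \<subseteq> L"
  shows "L \<noteq> {} \<and> card L \<noteq> 1"
proof (cases "finite L")
  case True
  then have "finite K" using assms(3) finite_subset by blast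
  then have "2 \<le> card K" using assms(1,2) by (metis One_nat_def card_0_eq less_2_cases not_le)
  also have "card K \<le> card L" using True assms(3) by (rule card_mono)
  finally show ?thesis by auto
qed (use assms in auto)

lemma sum_Pow_low_degree:
  fixes g :: "nat set \<Rightarrow> real"
  assumes "finite U" and "\<And>J. J \<subseteq> U \<Longrightarrow> J \<noteq> {} \<Longrightarrow> card J \<noteq> 1 \<Longrightarrow> g J = 0"
  shows "(\<Sum>J\<in>Pow U. g J) = g {} + (\<Sum>i\<in>U. g {i})"
proof -
  have sub: "insert {} ((\<lambda>i. {i}) ` U) \<subseteq> Pow U" by auto
  have "(\<Sum>J\<in>Pow U. g J) = (\<Sum>J\<in>insert {} ((\<lambda>i. {i}) ` U). g J)"
    using assms by (intro sum.mono_neutral_right[OF _ sub]) (auto simp: card_1_singleton_iff)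
  also have "\<dots> = g {} + (\<Sum>i\<in>U. g {i})"
    using assms(1) by (subst sum.insert) (auto simp: sum.reindex)
  finally show ?thesis .
qed

lemma moment_quadratic_form:
  fixes f z :: "nat set \<Rightarrow> real"
  assumes U: "finite U"
    and f_large: "\<And>K. K \<subseteq> U \<Longrightarrow> K \<noteq> {} \<Longrightarrow> card K \<noteq> 1 \<Longrightarrow> f K = 0"
  shows "(\<Sum>I\<in>Pow U. \<Sum>J\<in>Pow U. z I * moment_mat f I J * z J)
       = f {} * (z {})\<^sup>2 + (\<Sum>i\<in>U. 2 * f {i} * z {} * z {i} + f {i} * (z {i})\<^sup>2)"
proof -
  have vanish: "f (I \<union> J) = 0"
    if "I \<subseteq> U" "J \<subseteq> U" "I \<noteq> {}" "card I \<noteq> 1" for I J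
    using large_set_mono[of I "I \<union> J"] that by (intro f_large) auto
  have row_empty: "(\<Sum>J\<in>Pow U. z {} * moment_mat f {} J * z J)
      = f {} * (z {})\<^sup>2 + (\<Sum>i\<in>U. f {i} * z {} * z {i})"
    by (subst sum_Pow_low_degree[OF U])
       (auto simp: moment_mat_def f_large power2_eq_square intro!: sum.cong)
  have row_single: "(\<Sum>J\<in>Pow U. z {i} * moment_mat f {i} J * z J)
      = f {i} * z {} * z {i} + f {i} * (z {i})\<^sup>2" if i: "i \<in> U" for i
  proof -
    have "(\<Sum>J\<in>Pow U. z {i} * moment_mat f {i} J * z J)
        = z {i} * f {i} * z {} + (\<Sum>j\<in>U. z {i} * f {i, j} * z {j})"
      using vanish[of J "{i}" for J] i
      by (subst sum_Pow_low_degree[OF U]) (auto simp: moment_mat_def Un_commute insert_commute)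
    also have "(\<Sum>j\<in>U. z {i} * f {i, j} * z {j}) = (\<Sum>j\<in>U. if j = i then f {i} * (z {i})\<^sup>2 else 0)"
      using f_large[of "{i, _}"] i by (intro sum.cong) (auto simp: power2_eq_square)
    finally show ?thesis using i U by (simp add: mult.commute)
  qed
  have "(\<Sum>I\<in>Pow U. \<Sum>J\<in>Pow U. z I * moment_mat f I J * z J)
      = (\<Sum>J\<in>Pow U. z {} * moment_mat f {} J * z J)
        + (\<Sum>i\<in>U. \<Sum>J\<in>Pow U. z {i} * moment_mat f {i} J * z J)"
    using vanish by (intro sum_Pow_low_degree[OF U] sum.neutral) (auto simp: moment_mat_def)
  also have "\<dots> = f {} * (z {})\<^sup>2 + (\<Sum>i\<in>U. f {i} * z {} * z {i})
                    + (\<Sum>i\<in>U. f {i} * z {} * z {i} + f {i} * (z {i})\<^sup>2)"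
    by (simp add: row_empty row_single)
  also have "\<dots> = f {} * (z {})\<^sup>2 + (\<Sum>i\<in>U. 2 * f {i} * z {} * z {i} + f {i} * (z {i})\<^sup>2)"
    by (simp add: sum.distrib sum_distrib_left mult.assoc)
  finally show ?thesis .
qed

lemma psd_moment_low_degree:
  fixes f :: "nat set \<Rightarrow> real"
  assumes U: "finite U"
    and f_large: "\<And>K. K \<subseteq> U \<Longrightarrow> K \<noteq> {} \<Longrightarrow> card K \<noteq> 1 \<Longrightarrow> f K = 0"
    and f_single: "\<And>i. i \<in> U \<Longrightarrow> 0 \<le> f {i}"
    and f_sum: "(\<Sum>i\<in>U. f {i}) \<le> f {}"
  shows "psd_on (Pow U) (moment_mat f)"
  unfolding psd_on_def
proof
  fix z :: "nat set \<Rightarrow> real"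
  have "(\<Sum>I\<in>Pow U. \<Sum>J\<in>Pow U. z I * moment_mat f I J * z J)
       = f {} * (z {})\<^sup>2 + (\<Sum>i\<in>U. 2 * f {i} * z {} * z {i} + f {i} * (z {i})\<^sup>2)"
    by (rule moment_quadratic_form[OF U f_large])
  also have "\<dots> = (f {} - (\<Sum>i\<in>U. f {i})) * (z {})\<^sup>2 + (\<Sum>i\<in>U. f {i} * (z {i} + z {})\<^sup>2)"
    by (simp add: sum.distrib power2_eq_square algebra_simps sum_distrib_left sum_distrib_right)
  also have "\<dots> \<ge> 0"
    using f_single f_sum by (intro add_nonneg_nonneg mult_nonneg_nonneg sum_nonneg) auto
  finally show "0 \<le> (\<Sum>I\<in>Pow U. \<Sum>J\<in>Pow U. z I * moment_mat f I J * z J)" .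
qed

definition deg1_vector :: "real \<Rightarrow> nat set \<Rightarrow> real" where
  "deg1_vector \<alpha> I = (if I = {} then 1 else if card I = 1 then \<alpha> else 0)"

lemma shift_deg1_empty:
  "shift V b a (deg1_vector \<alpha>) {} = b + \<alpha> * sum a V"
  by (simp add: shift_def deg1_vector_def sum_distrib_left mult.commute)

lemma shift_deg1_single:
  assumes "finite V" and "i \<in> V"
  shows "shift V b a (deg1_vector \<alpha>) {i} = (b + a i) * \<alpha>"
proof -
  have "(\<Sum>j\<in>V. a j * deg1_vector \<alpha> ({i} \<union> {j})) = (\<Sum>j\<in>V. if j = i then a i * \<alpha> else 0)"
    by (intro sum.cong) (auto simp: deg1_vector_def)
  then show ?thesis using assms by (simp add: shift_def deg1_vector_def algebra_simps)
qed

lemma shift_deg1_large: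
  assumes "K \<noteq> {}" and "card K \<noteq> 1"
  shows "shift V b a (deg1_vector \<alpha>) K = 0"
proof -
  have "deg1_vector \<alpha> (K \<union> {j}) = 0" for j
    using large_set_mono[OF assms Un_upper1] unfolding deg1_vector_def by presburger
  then show ?thesis using assms by (simp add: shift_def deg1_vector_def)
qed

lemma deg1_vector_in_SA:
  assumes V: "finite V"
    and \<alpha>: "0 \<le> \<alpha>" "\<alpha> \<le> 1" "real t * \<alpha> \<le> 1"
    and shift_single: "\<And>l i. l \<in> L \<Longrightarrow> i \<in> V \<Longrightarrow> 0 \<le> (b l + a l i) * \<alpha>"
    and shift_sum: "\<And>l W. l \<in> L \<Longrightarrow> W \<subseteq> V \<Longrightarrow> card W \<le> t - 1 \<Longrightarrow>
                      (\<Sum>i\<in>W. (b l + a l i) * \<alpha>) \<le> b l + \<alpha> * sum (a l) V"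
  shows "deg1_vector \<alpha> \<in> SA t V L b a"
proof -
  have moment: "psd_on (Pow U) (moment_mat (deg1_vector \<alpha>))"
    if "U \<subseteq> V" "card U \<le> t" for U
  proof (rule psd_moment_low_degree)
    show "finite U" using that V finite_subset by blast
    have "real (card U) * \<alpha> \<le> real t * \<alpha>" using that \<alpha>(1) by (simp add: mult_right_mono)
    then show "(\<Sum>i\<in>U. deg1_vector \<alpha> {i}) \<le> deg1_vector \<alpha> {}"
      using \<alpha>(3) by (simp add: deg1_vector_def)
  qed (auto simp: deg1_vector_def \<alpha>)
  have shifted: "psd_on (Pow W) (moment_mat (shift V (b l) (a l) (deg1_vector \<alpha>)))"
    if "l \<in> L" "W \<subseteq> V" "card W \<le> t - 1" for l W
  proof (rule psd_moment_low_degree)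
    show "finite W" using that V finite_subset by blast
    then show "(\<Sum>i\<in>W. shift V (b l) (a l) (deg1_vector \<alpha>) {i})
               \<le> shift V (b l) (a l) (deg1_vector \<alpha>) {}"
      using that V shift_sum by (simp add: shift_deg1_empty shift_deg1_single subsetD)
  qed (use that V shift_single in \<open>auto simp: shift_deg1_large shift_deg1_single\<close>)
  show ?thesis
    unfolding SA_def using moment shifted \<alpha> by (auto simp: deg1_vector_def)
qed

text \<open>The arithmetic facts about \<alpha> = C / (n + (t-1)(1-\<epsilon>)), C = 2(1-\<epsilon>): the total weight
  of t singletons is at most 1, and (t-1)(C-1)\<alpha> \<le> C - n\<alpha> = (t-1)(1-\<epsilon>)\<alpha>, using C - 1 \<le> 1 - \<epsilon>.\<close>
lemma knapsack_alpha_bounds: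
  fixes n t :: nat and \<epsilon> :: real
  assumes "t + 1 \<le> n" and "1 \<le> t" and "0 < \<epsilon>" and "\<epsilon> \<le> 1/2"
  defines "\<alpha> \<equiv> 2 * (1 - \<epsilon>) / (real n + (real t - 1) * (1 - \<epsilon>))"
  shows "0 \<le> \<alpha>" and "real t * \<alpha> \<le> 1"
    and "(real t - 1) * ((2 * (1 - \<epsilon>) - 1) * \<alpha>) \<le> 2 * (1 - \<epsilon>) - real n * \<alpha>"
proof -
  have t1: "0 \<le> real t - 1" and n: "real t + 1 \<le> real n" using assms(1,2) by linarith+
  have "0 \<le> (real t - 1) * (1 - \<epsilon>)" using t1 assms(4) by simp
  then have den: "0 < real n + (real t - 1) * (1 - \<epsilon>)" using n by linarith
  show \<alpha>0: "0 \<le> \<alpha>" unfolding \<alpha>_def using den assms(4) by simp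
  have "real t * (2 * (1 - \<epsilon>)) = (real t + 1) - (real t + 1) * \<epsilon> + (real t - 1) * (1 - \<epsilon>)"
    by (simp add: algebra_simps)
  also have "\<dots> \<le> real n + (real t - 1) * (1 - \<epsilon>)"
    using n mult_nonneg_nonneg[of "real t + 1" \<epsilon>] assms(3) by linarith
  finally show "real t * \<alpha> \<le> 1" unfolding \<alpha>_def using den by (simp add: field_simps)
  have eq: "\<alpha> * (real n + (real t - 1) * (1 - \<epsilon>)) = 2 * (1 - \<epsilon>)"
    unfolding \<alpha>_def using den by simp
  have "(real t - 1) * ((2 * (1 - \<epsilon>) - 1) * \<alpha>) \<le> (real t - 1) * ((1 - \<epsilon>) * \<alpha>)"
    using t1 \<alpha>0 assms(3) by (intro mult_left_mono mult_right_mono) auto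
  also have "\<dots> = 2 * (1 - \<epsilon>) - real n * \<alpha>" using eq by (simp add: algebra_simps)
  finally show "(real t - 1) * ((2 * (1 - \<epsilon>) - 1) * \<alpha>) \<le> 2 * (1 - \<epsilon>) - real n * \<alpha>" .
qed

text \<open>With unit costs and values and a capacity in [1,2), at most one object fits,
  so the integral optimum is 1 (for a nonempty set of objects).\<close>
lemma knapsack_opt_unit:
  assumes "V \<noteq> {}" and "1 \<le> C" and "C < 2"
  shows "knapsack_opt V (\<lambda>_. 1) (\<lambda>_. 1) C = 1"
proof -
  obtain i where i: "i \<in> V" using assms(1) by blast
  have "{(\<Sum>i\<in>S. (1::real)) | S. S \<subseteq> V \<and> (\<Sum>i\<in>S. 1) \<le> C}
      = {real (card S) | S. S \<subseteq> V \<and> real (card S) \<le> C}" by simp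
  also have "\<dots> = {0, 1}"
  proof (intro equalityI subsetI)
    fix x assume "x \<in> {real (card S) | S. S \<subseteq> V \<and> real (card S) \<le> C}"
    then show "x \<in> {0, 1}" using assms(3) by auto
  next
    fix x :: real assume "x \<in> {0, 1}"
    then have "x = real (card {}) \<or> x = real (card {i})" by auto
    then show "x \<in> {real (card S) | S. S \<subseteq> V \<and> real (card S) \<le> C}"
      using i assms(2) by fastforce
  qed
  finally show ?thesis unfolding knapsack_opt_def by simp
qed

theorem mainTheorem2:
  fixes n t :: nat and \<epsilon> :: real
  assumes "n \<ge> 2" and "1 \<le> t" and "t \<le> n - 1"
    and "0 < \<epsilon>" and "\<epsilon> \<le> 1/2"
  defines "V \<equiv> {1..n}"
    and "C \<equiv> 2 * (1 - \<epsilon>)"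
    and "c \<equiv> (\<lambda>i::nat. 1::real)"
    and "v \<equiv> (\<lambda>i::nat. 1::real)"
    and "\<alpha> \<equiv> 2 * (1 - \<epsilon>) / (real n + (real t - 1) * (1 - \<epsilon>))"
    and "y \<equiv> (\<lambda>I::nat set. if I = {} then 1 else if card I = 1 then 2 * (1 - \<epsilon>) / (real n + (real t - 1) * (1 - \<epsilon>)) else 0)"
  shows "y \<in> SA t V {()} (\<lambda>_. C) (\<lambda>_ j. - c j)
         \<and> (\<Sum>i\<in>V. v i * y {i}) = real n * \<alpha>
         \<and> knapsack_opt V c v C = 1"
proof -
  have y: "y = deg1_vector \<alpha>" unfolding y_def \<alpha>_def deg1_vector_def ..
  have tn: "t + 1 \<le> n" using assms(1,3) by linarith
  note bounds = knapsack_alpha_bounds[OF tn assms(2,4,5), folded \<alpha>_def C_def]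
  have "1 * \<alpha> \<le> real t * \<alpha>" using assms(2) bounds(1) by (intro mult_right_mono) auto
  then have \<alpha>1: "\<alpha> \<le> 1" using bounds(2) by linarith
  have shift_single: "0 \<le> (C - 1) * \<alpha>" using assms(5) bounds(1) by (simp add: C_def)
  have shift_sum: "real (card W) * ((C - 1) * \<alpha>) \<le> C - real n * \<alpha>" if "card W \<le> t - 1" for W
  proof -
    have "real (card W) \<le> real t - 1" using that assms(2) by linarith
    then have "real (card W) * ((C - 1) * \<alpha>) \<le> (real t - 1) * ((C - 1) * \<alpha>)"
      using shift_single by (rule mult_right_mono)
    with bounds(3) show ?thesis by linarith
  qed
  have "y \<in> SA t V {()} (\<lambda>_. C) (\<lambda>_ j. - c j)"
    unfolding y using bounds(1,2) \<alpha>1 shift_single shift_sum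
    by (intro deg1_vector_in_SA) (auto simp: V_def c_def mult.commute[of \<alpha>])
  moreover have "(\<Sum>i\<in>V. v i * y {i}) = real n * \<alpha>"
    by (simp add: V_def v_def y deg1_vector_def)
  moreover have "knapsack_opt V c v C = 1"
    unfolding c_def v_def C_def V_def using assms(1,4,5) by (intro knapsack_opt_unit) auto
  ultimately show ?thesis by blast
qed

end
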